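(* For the prism $Y_n=C_n\square P_2$ with $n\ge 3$: $IDI(Y_n)=2$ if $n\ge 6$, and $IDI(Y_3)=IDI(Y_4)=IDI(Y_5)=3$.
   Context: $C_n$ is the cycle on $n$ vertices, $P_2$ the path on two vertices, and $\square$ the Cartesian product. For a finite simple connected graph $G=(V,E)$ with diameter $d$, a rank assignment is a function $f:V\to\mathbb{R}$; under $f$, the string of a vertex $v$ is the $d$-vector whose $i$-th coordinate is the sum of $f(w)$ over all vertices $w$ with $d(v,w)=i$. The ID-index $IDI(G)$ is the minimum $k$ such that there exists $f:V\to\mathbb{R}$ with $|f(V)|=k$ under which all vertices have distinct strings. *)

theory Defs
  imports Main "HOL.Real"
begin

type_synonym 'a graph = "'a set \<times> ('a \<Rightarrow> 'a \<Rightarrow> bool)"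

definition verts :: "'a graph \<Rightarrow> 'a set" where "verts G = fst G"
definition adj :: "'a graph \<Rightarrow> 'a \<Rightarrow> 'a \<Rightarrow> bool" where
  "adj G u v = (u \<in> verts G \<and> v \<in> verts G \<and> snd G u v)"

definition gdist :: "'a graph \<Rightarrow> 'a \<Rightarrow> 'a \<Rightarrow> nat" where
  "gdist G u v = (LEAST k. ((adj G) ^^ k) u v)"

definition diameter :: "'a graph \<Rightarrow> nat" where
  "diameter G = Max {gdist G u v | u v. u \<in> verts G \<and> v \<in> verts G}"

definition vstring :: "'a graph \<Rightarrow> ('a \<Rightarrow> real) \<Rightarrow> 'a \<Rightarrow> real list" where
  "vstring G f v = map (\<lambda>i. \<Sum>w\<in>{w \<in> verts G. gdist G v w = i}. f w) [1..<diameter G + 1]"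

definition IDI :: "'a graph \<Rightarrow> nat" where
  "IDI G = (LEAST k. \<exists>f :: 'a \<Rightarrow> real. card (f ` verts G) = k \<and> inj_on (vstring G f) (verts G))"

definition cycle_graph :: "nat \<Rightarrow> nat graph" where
  "cycle_graph n = ({0..<n}, \<lambda>i j. j = (i + 1) mod n \<or> i = (j + 1) mod n)"

definition path_graph :: "nat \<Rightarrow> nat graph" where
  "path_graph n = ({0..<n}, \<lambda>i j. j = i + 1 \<or> i = j + 1)"

definition cart_prod :: "'a graph \<Rightarrow> 'b graph \<Rightarrow> ('a \<times> 'b) graph" where
  "cart_prod G H = (verts G \<times> verts H,
     \<lambda>(u1, u2) (v1, v2). (u1 = v1 \<and> adj H u2 v2) \<or> (u2 = v2 \<and> adj G u1 v1))"

definition prism :: "nat \<Rightarrow> (nat \<times> nat) graph" where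
  "prism n = cart_prod (cycle_graph n) (path_graph 2)"

end

theory Submission
  imports Defs
begin

text \<open>
  The distance in \<open>Y\<^sub>n = C\<^sub>n \<box> P\<^sub>2\<close> is the cycle distance plus the layer difference, so the
  diameter is \<open>\<lfloor>n/2\<rfloor> + 1\<close> and every vertex sees the same number of vertices at each
  distance.  Hence constant assignments never work, and if a two-valued assignment distinguishes
  the vertices, then so does the 0/1 indicator of one of its level sets.  For \<open>n = 3, 4, 5\<close> an
  evaluation over all 0/1 assignments shows that none does, while an explicit three-valued one
  does; for \<open>n = 6\<close> an explicit 0/1 assignment works.

  For \<open>n \<ge> 7\<close> take the indicator of layer 1 with \<open>(2,1)\<close> removed and \<open>(0,0)\<close> added.  Entry
  \<open>k\<close> of the string of \<open>v\<close> is the number of layer-1 vertices at distance \<open>k\<close> from \<open>v\<close>, plus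
  \<open>[d(v,(0,0)) = k]\<close>, minus \<open>[d(v,(2,1)) = k]\<close>.  The entries of a string sum to the total
  weight minus the weight of \<open>v\<close>; this separates the layers except for \<open>(0,0)\<close> and \<open>(2,1)\<close>,
  which entries 1 and 3 handle.  Inside a layer the two signed indicators recover the distances
  to \<open>(0,0)\<close> and \<open>(2,1)\<close>, and these determine the vertex.
\<close>

section \<open>Strings of rank assignments on a finite graph\<close>

definition sphere :: "'a graph \<Rightarrow> 'a \<Rightarrow> nat \<Rightarrow> 'a set" where
  "sphere G v i = {w \<in> verts G. gdist G v w = i}"

definition distance_degree_regular :: "'a graph \<Rightarrow> bool" where
  "distance_degree_regular G \<longleftrightarrow>
     (\<forall>u \<in> verts G. \<forall>v \<in> verts G. \<forall>i. card (sphere G u i) = card (sphere G v i))"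

lemma vstring_sphere: "vstring G f v = map (\<lambda>i. \<Sum>w\<in>sphere G v i. f w) [1..<diameter G + 1]"
  by (simp add: vstring_def sphere_def)

lemma gdist_self: "gdist G v v = 0"
  by (simp add: gdist_def)

lemma gdist_le_diameter:
  assumes "finite (verts G)" "u \<in> verts G" "v \<in> verts G"
  shows "gdist G u v \<le> diameter G"
  unfolding diameter_def
proof (rule Max_ge)
  show "finite {gdist G u v |u v. u \<in> verts G \<and> v \<in> verts G}"
    using assms(1) by (intro finite_image_set2) simp_all
qed (use assms(2,3) in blast)

lemma sum_list_vstring:
  assumes "finite (verts G)" "v \<in> verts G"
    and "\<And>w. w \<in> verts G \<Longrightarrow> gdist G v w = 0 \<Longrightarrow> w = v"
  shows "sum_list (vstring G f v) = (\<Sum>w\<in>verts G. f w) - f v"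
proof -
  have "sum_list (vstring G f v) = (\<Sum>i\<in>{1..diameter G}. \<Sum>w\<in>sphere G v i. f w)"
    by (simp only: vstring_sphere interv_sum_list_conv_sum_set_nat set_upt
        Suc_eq_plus1[symmetric] atLeastLessThanSuc_atLeastAtMost)
  also have "\<dots> = (\<Sum>i\<in>{1..diameter G}. \<Sum>w | w \<in> verts G - {v} \<and> gdist G v w = i. f w)"
    by (intro sum.cong refl) (auto simp: sphere_def gdist_self)
  also have "\<dots> = (\<Sum>w\<in>verts G - {v}. f w)"
  proof (rule sum.group)
    show "gdist G v ` (verts G - {v}) \<subseteq> {1..diameter G}"
      using assms gdist_le_diameter by (fastforce simp: Suc_le_eq)
  qed (use assms(1) in simp_all)
  also have "\<dots> = (\<Sum>w\<in>verts G. f w) - f v"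
    using assms(1,2) by (simp add: sum_diff1)
  finally show ?thesis .
qed

lemma rank_eq_if_vstring_eq:
  assumes "finite (verts G)" "u \<in> verts G" "v \<in> verts G"
    and "\<And>x w. x \<in> verts G \<Longrightarrow> w \<in> verts G \<Longrightarrow> gdist G x w = 0 \<Longrightarrow> w = x"
    and "vstring G f u = vstring G f v"
  shows "f u = f v"
  using sum_list_vstring[of G u f] sum_list_vstring[of G v f] assms by simp

lemma inj_on_vstring_indicator_if_two_valued:
  assumes "distance_degree_regular G" "f ` verts G \<subseteq> {\<alpha>, \<beta>}"
    and "inj_on (vstring G f) (verts G)"
  shows "inj_on (vstring G (\<lambda>w. of_bool (f w = \<alpha>))) (verts G)"
proof (rule inj_onI)
  fix u v assume uv: "u \<in> verts G" "v \<in> verts G"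
    and eq: "vstring G (\<lambda>w. of_bool (f w = \<alpha>)) u = vstring G (\<lambda>w. of_bool (f w = \<alpha>)) v"
  have affine: "(\<Sum>w\<in>sphere G x i. f w)
      = \<beta> * card (sphere G x i) + (\<alpha> - \<beta>) * (\<Sum>w\<in>sphere G x i. of_bool (f w = \<alpha>))" for x i
  proof -
    have "(\<Sum>w\<in>sphere G x i. f w) = (\<Sum>w\<in>sphere G x i. \<beta> + (\<alpha> - \<beta>) * of_bool (f w = \<alpha>))"
      using assms(2) by (intro sum.cong) (auto simp: sphere_def)
    then show ?thesis
      by (simp add: sum.distrib sum_distrib_left mult.commute)
  qed
  have sums: "(\<Sum>w\<in>sphere G u i. of_bool (f w = \<alpha>)) = (\<Sum>w\<in>sphere G v i. of_bool (f w = \<alpha>) :: real)"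
    if "i \<in> set [1..<diameter G + 1]" for i
    using eq that unfolding vstring_sphere map_eq_conv by blast
  have cards: "card (sphere G u i) = card (sphere G v i)" for i
    using assms(1) uv unfolding distance_degree_regular_def by blast
  have "vstring G f u = vstring G f v"
    unfolding vstring_sphere affine using sums cards by (intro map_cong) simp_all
  with assms(3) uv show "u = v"
    by (blast dest: inj_onD)
qed

lemma two_le_card_image_if_inj_on_vstring:
  assumes "distance_degree_regular G" "finite (verts G)"
    and "u \<in> verts G" "v \<in> verts G" "u \<noteq> v"
    and "inj_on (vstring G f) (verts G)"
  shows "2 \<le> card (f ` verts G)"
proof (rule ccontr)
  assume "\<not> 2 \<le> card (f ` verts G)"
  moreover have "card (f ` verts G) \<noteq> 0"
    using assms(2,3) by (auto simp: card_eq_0_iff)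
  ultimately have "card (f ` verts G) = 1"
    by linarith
  then obtain c where c: "f ` verts G = {c}"
    by (rule card_1_singletonE)
  have "(\<Sum>w\<in>sphere G x i. f w) = (\<Sum>w\<in>sphere G x i. c)" for x i
    using c by (intro sum.cong) (auto simp: sphere_def)
  moreover have "card (sphere G u i) = card (sphere G v i)" for i
    using assms(1,3,4) unfolding distance_degree_regular_def by blast
  ultimately have "vstring G f u = vstring G f v"
    by (simp add: vstring_sphere)
  then show False
    using assms(3-6) inj_onD by metis
qed

lemma IDI_eqI:
  assumes "\<exists>f. card (f ` verts G) = k \<and> inj_on (vstring G f) (verts G)"
    and "\<And>f. inj_on (vstring G f) (verts G) \<Longrightarrow> k \<le> card (f ` verts G)"
  shows "IDI G = k"
  unfolding IDI_def using assms by (intro Least_equality) auto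

lemma relpowp_potential_le:
  assumes "\<And>x y. R x y \<Longrightarrow> h y \<le> h x + 1" "(R ^^ k) u v"
  shows "h v \<le> h u + k"
  using assms(2)
proof (induction k arbitrary: v)
  case 0
  then show ?case by simp
next
  case (Suc k)
  then obtain y where "(R ^^ k) u y" "R y v"
    by (auto elim: relpowp_Suc_E)
  with Suc.IH assms(1)[of y v] show ?case
    by fastforce
qed

section \<open>Distances in the prism\<close>

definition cycle_dist :: "nat \<Rightarrow> nat \<Rightarrow> nat \<Rightarrow> nat" where
  "cycle_dist n i j = (if i \<le> j then min (j - i) (n - (j - i)) else min (i - j) (n - (i - j)))"

definition prism_dist :: "nat \<Rightarrow> nat \<times> nat \<Rightarrow> nat \<times> nat \<Rightarrow> nat" where
  "prism_dist n u v = cycle_dist n (fst u) (fst v) + of_bool (snd u \<noteq> snd v)"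

lemma verts_prism: "verts (prism n) = {0..<n} \<times> {0..<2}"
  by (simp add: prism_def cart_prod_def verts_def cycle_graph_def path_graph_def)

lemma adj_prism:
  "adj (prism n) (i, a) (j, b) \<longleftrightarrow> i < n \<and> j < n \<and> a < 2 \<and> b < 2 \<and>
     (i = j \<and> a \<noteq> b \<or> a = b \<and> (j = (i + 1) mod n \<or> i = (j + 1) mod n))"
proof -
  have "a < 2 \<Longrightarrow> b < 2 \<Longrightarrow> (b = a + 1 \<or> a = b + 1) \<longleftrightarrow> a \<noteq> b"
    by auto
  then show ?thesis
    by (auto simp: prism_def cart_prod_def adj_def verts_def cycle_graph_def path_graph_def)
qed

lemma min_complement_le_half: "min d (n - d) \<le> (n::nat) div 2"
  by (simp add: min_def) presburger

lemma cycle_dist_le_half: "cycle_dist n i j \<le> n div 2"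
  unfolding cycle_dist_def by (split if_split) (simp only: min_complement_le_half simp_thms)

lemma cycle_dist_eq_0_iff: "i < n \<Longrightarrow> j < n \<Longrightarrow> cycle_dist n i j = 0 \<longleftrightarrow> i = j"
  by (auto simp: cycle_dist_def min_def)

lemma min_complement_step:
  fixes a b n :: nat
  assumes "b \<le> a + 1" "a \<le> b + 1" "a \<le> n" "b \<le> n"
  shows "min b (n - b) \<le> min a (n - a) + 1"
  using assms by (simp add: min_def; linarith)

lemma cycle_dist_Suc_step:
  assumes "i < n" "Suc j < n"
  shows "cycle_dist n i (Suc j) \<le> cycle_dist n i j + 1" "cycle_dist n i j \<le> cycle_dist n i (Suc j) + 1"
  using assms unfolding cycle_dist_def by (auto intro: min_complement_step)

lemma cycle_dist_wrap_step:
  assumes "i < n"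
  shows "cycle_dist n i 0 \<le> cycle_dist n i (n - 1) + 1" "cycle_dist n i (n - 1) \<le> cycle_dist n i 0 + 1"
  using assms unfolding cycle_dist_def min_def by (simp split: if_splits; arith)+

lemma cycle_dist_step:
  assumes "i < n" "j < n" "j' < n" "j' = (j + 1) mod n \<or> j = (j' + 1) mod n"
  shows "cycle_dist n i j' \<le> cycle_dist n i j + 1"
proof -
  have "j' = Suc j \<or> j = Suc j' \<or> j = 0 \<and> j' = n - 1 \<or> j = n - 1 \<and> j' = 0"
    using assms(2-4) by (metis Suc_eq_plus1 Suc_lessI diff_Suc_1 mod_less mod_self)
  then show ?thesis
    using cycle_dist_Suc_step[OF assms(1)] cycle_dist_wrap_step[OF assms(1)] assms(2,3) by auto
qed

lemma prism_dist_step: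
  "adj (prism n) x y \<Longrightarrow> u \<in> verts (prism n) \<Longrightarrow> prism_dist n u y \<le> prism_dist n u x + 1"
  using cycle_dist_step[of "fst u" n "fst x" "fst y"]
  by (cases u; cases x; cases y) (auto simp: adj_prism verts_prism prism_dist_def)

lemma prism_walk_forward:
  assumes "i < n" "a < 2"
  shows "(adj (prism n) ^^ m) (i, a) ((i + m) mod n, a)"
proof (induction m)
  case 0
  then show ?case using assms by simp
next
  case (Suc m)
  have "adj (prism n) ((i + m) mod n, a) ((i + Suc m) mod n, a)"
    using assms by (simp add: adj_prism mod_Suc_eq)
  with Suc show ?case by (rule relpowp_Suc_I)
qed

lemma prism_walk_backward:
  assumes "i < n" "a < 2"
  shows "(adj (prism n) ^^ m) ((i + m) mod n, a) (i, a)"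
proof (induction m)
  case 0
  then show ?case using assms by simp
next
  case (Suc m)
  have "adj (prism n) ((i + Suc m) mod n, a) ((i + m) mod n, a)"
    using assms by (simp add: adj_prism mod_Suc_eq)
  from this Suc show ?case by (rule relpowp_Suc_I2)
qed

lemma prism_walk_cycle_dist:
  assumes "i < n" "j < n" "a < 2"
  shows "(adj (prism n) ^^ cycle_dist n i j) (i, a) (j, a)"
proof (cases "i \<le> j")
  case True
  show ?thesis
  proof (cases "j - i \<le> n - (j - i)")
    case True
    with prism_walk_forward[OF assms(1,3), of "j - i"] \<open>i \<le> j\<close> assms show ?thesis
      by (simp add: cycle_dist_def)
  next
    case False
    have "(j + (n - (j - i))) mod n = i" using \<open>i \<le> j\<close> assms by simp
    with prism_walk_backward[OF assms(2,3), of "n - (j - i)"] False \<open>i \<le> j\<close> show ?thesis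
      by (simp add: cycle_dist_def)
  qed
next
  case False
  show ?thesis
  proof (cases "i - j \<le> n - (i - j)")
    case True
    with prism_walk_backward[OF assms(2,3), of "i - j"] False assms show ?thesis
      by (simp add: cycle_dist_def)
  next
    case le: False
    have "(i + (n - (i - j))) mod n = j" using False assms by simp
    with prism_walk_forward[OF assms(1,3), of "n - (i - j)"] le False show ?thesis
      by (simp add: cycle_dist_def)
  qed
qed

lemma gdist_prism:
  assumes "u \<in> verts (prism n)" "v \<in> verts (prism n)"
  shows "gdist (prism n) u v = prism_dist n u v"
  unfolding gdist_def
proof (rule Least_equality)
  obtain i a j b where uv: "u = (i, a)" "v = (j, b)" "i < n" "j < n" "a < 2" "b < 2"
    using assms by (auto simp: verts_prism)
  have walk: "(adj (prism n) ^^ cycle_dist n i j) (i, a) (j, a)"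
    using prism_walk_cycle_dist uv by simp
  show "(adj (prism n) ^^ prism_dist n u v) u v"
  proof (cases "a = b")
    case True
    with walk uv show ?thesis by (simp add: prism_dist_def)
  next
    case False
    with uv have "adj (prism n) (j, a) (j, b)" by (simp add: adj_prism)
    with walk have "(adj (prism n) ^^ Suc (cycle_dist n i j)) (i, a) (j, b)"
      by (rule relpowp_Suc_I)
    with False uv show ?thesis by (simp add: prism_dist_def)
  qed
next
  fix k assume "(adj (prism n) ^^ k) u v"
  with prism_dist_step[OF _ assms(1)] have "prism_dist n u v \<le> prism_dist n u u + k"
    by (rule relpowp_potential_le)
  then show "prism_dist n u v \<le> k"
    by (simp add: prism_dist_def cycle_dist_def)
qed

lemma prism_dist_le: "prism_dist n u v \<le> n div 2 + 1"
  using cycle_dist_le_half[of n "fst u" "fst v"] by (simp add: prism_dist_def)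

lemma diameter_prism:
  assumes "0 < n"
  shows "diameter (prism n) = n div 2 + 1"
  unfolding diameter_def
proof (rule Max_eqI)
  show "finite {gdist (prism n) u v |u v. u \<in> verts (prism n) \<and> v \<in> verts (prism n)}"
    by (intro finite_image_set2) (simp_all add: verts_prism)
next
  fix d assume "d \<in> {gdist (prism n) u v |u v. u \<in> verts (prism n) \<and> v \<in> verts (prism n)}"
  then obtain u v where "d = gdist (prism n) u v" "u \<in> verts (prism n)" "v \<in> verts (prism n)"
    by blast
  then show "d \<le> n div 2 + 1"
    using prism_dist_le by (simp add: gdist_prism)
next
  have "gdist (prism n) (0, 0) (n div 2, 1) = n div 2 + 1"
    using assms by (simp add: gdist_prism verts_prism prism_dist_def cycle_dist_def)
  moreover have "(0, 0) \<in> verts (prism n)" "(n div 2, 1) \<in> verts (prism n)"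
    using assms by (auto simp: verts_prism)
  ultimately show "n div 2 + 1 \<in> {gdist (prism n) u v |u v. u \<in> verts (prism n) \<and> v \<in> verts (prism n)}"
    by force
qed

lemma prism_dist_eq_0_iff:
  "u \<in> verts (prism n) \<Longrightarrow> v \<in> verts (prism n) \<Longrightarrow> prism_dist n u v = 0 \<longleftrightarrow> u = v"
  by (cases u; cases v) (auto simp: prism_dist_def verts_prism cycle_dist_eq_0_iff)

definition cycle_sphere_size :: "nat \<Rightarrow> nat \<Rightarrow> nat" where
  "cycle_sphere_size n k = (if k = 0 then 1 else if 2 * k < n then 2 else if 2 * k = n then 1 else 0)"

lemma card_min_complement_eq:
  assumes "0 < n"
  shows "card {f. f < n \<and> min f (n - f) = k} = cycle_sphere_size n k"
proof -
  consider "k = 0" | "0 < k" "2 * k < n" | "0 < k" "2 * k = n" | "n < 2 * k"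
    by linarith
  then show ?thesis
  proof cases
    case 1
    with assms have "{f. f < n \<and> min f (n - f) = k} = {0}"
      by (auto simp: min_def)
    with 1 show ?thesis by (simp add: cycle_sphere_size_def)
  next
    case 2
    then have "{f. f < n \<and> min f (n - f) = k} = {k, n - k}"
      by (auto simp: min_def)
    with 2 show ?thesis by (simp add: cycle_sphere_size_def)
  next
    case 3
    then have "{f. f < n \<and> min f (n - f) = k} = {k}"
      by (auto simp: min_def)
    with 3 show ?thesis by (simp add: cycle_sphere_size_def)
  next
    case 4
    then have "{f. f < n \<and> min f (n - f) = k} = {}"
      by (auto simp: min_def)
    with 4 show ?thesis by (simp add: cycle_sphere_size_def)
  qed
qed

lemma card_cycle_sphere:
  assumes "i < n"
  shows "card {j. j < n \<and> cycle_dist n i j = k} = cycle_sphere_size n k"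
proof -
  define r where "r j = (if i \<le> j then j - i else j + n - i)" for j
  define r' where "r' f = (if f + i < n then f + i else f + i - n)" for f
  have r: "r j < n" "r' (r j) = j" if "j < n" for j
    using assms that by (auto simp: r_def r'_def)
  have r': "r' f < n" "r (r' f) = f" if "f < n" for f
    using assms that by (auto simp: r_def r'_def)
  have dist: "cycle_dist n i j = min (r j) (n - r j)" if "j < n" for j
    using assms that unfolding r_def cycle_dist_def by (cases "i \<le> j") auto
  have "bij_betw r {j. j < n \<and> cycle_dist n i j = k} {f. f < n \<and> min f (n - f) = k}"
  proof (rule bij_betw_byWitness[where f' = r'])
    show "r ` {j. j < n \<and> cycle_dist n i j = k} \<subseteq> {f. f < n \<and> min f (n - f) = k}"
      using r(1) by (intro image_subsetI) (simp add: dist[symmetric])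
    show "r' ` {f. f < n \<and> min f (n - f) = k} \<subseteq> {j. j < n \<and> cycle_dist n i j = k}"
      using r' by (intro image_subsetI) (simp add: dist)
  qed (use r r' in simp_all)
  then have "card {j. j < n \<and> cycle_dist n i j = k} = card {f. f < n \<and> min f (n - f) = k}"
    by (rule bij_betw_same_card)
  also have "\<dots> = cycle_sphere_size n k"
    using assms by (intro card_min_complement_eq) simp
  finally show ?thesis .
qed

lemma sphere_prism:
  "v \<in> verts (prism n) \<Longrightarrow> sphere (prism n) v k = {w \<in> verts (prism n). prism_dist n v w = k}"
  by (auto simp: sphere_def gdist_prism)

lemma vstring_prism:
  assumes "0 < n" "v \<in> verts (prism n)"
  shows "vstring (prism n) f v =
    map (\<lambda>k. \<Sum>w | w \<in> verts (prism n) \<and> prism_dist n v w = k. f w) [1..<n div 2 + 2]"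
  using assms by (simp add: vstring_sphere sphere_prism diameter_prism)

lemma card_prism_layer_sphere:
  assumes "i < n" "a < 2" "b < 2"
  shows "card {w \<in> verts (prism n). prism_dist n (i, a) w = k \<and> snd w = b}
    = card {j. j < n \<and> cycle_dist n i j + of_bool (a \<noteq> b) = k}"
proof -
  have "{w \<in> verts (prism n). prism_dist n (i, a) w = k \<and> snd w = b}
      = (\<lambda>j. (j, b)) ` {j. j < n \<and> cycle_dist n i j + of_bool (a \<noteq> b) = k}"
    using assms(3) by (auto simp: verts_prism prism_dist_def)
  then show ?thesis
    by (simp add: card_image inj_on_def)
qed

lemma card_prism_sphere:
  assumes "i < n" "a < 2"
  shows "card {w \<in> verts (prism n). prism_dist n (i, a) w = k}
    = (if k = 0 then 1 else cycle_sphere_size n k + cycle_sphere_size n (k - 1))"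
proof (cases "k = 0")
  case True
  with assms have "{w \<in> verts (prism n). prism_dist n (i, a) w = k} = {(i, a)}"
    by (auto simp: prism_dist_eq_0_iff verts_prism)
  with True show ?thesis by simp
next
  case False
  define a' where "a' = 1 - a"
  have a': "a' < 2" "a \<noteq> a'" "\<And>b. b < 2 \<Longrightarrow> b = a \<or> b = a'"
    using assms(2) unfolding a'_def by presburger+
  let ?layer = "\<lambda>b. {w \<in> verts (prism n). prism_dist n (i, a) w = k \<and> snd w = b}"
  have "{w \<in> verts (prism n). prism_dist n (i, a) w = k} = ?layer a \<union> ?layer a'"
    by (auto simp: verts_prism dest: a'(3))
  moreover have "card (?layer a) = cycle_sphere_size n k"
    using assms card_prism_layer_sphere[of i n a a] card_cycle_sphere by simp
  moreover have "card (?layer a') = cycle_sphere_size n (k - 1)"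
  proof -
    have "{j. j < n \<and> cycle_dist n i j + 1 = k} = {j. j < n \<and> cycle_dist n i j = k - 1}"
      using False by auto
    then show ?thesis
      using assms a' card_prism_layer_sphere[of i n a a'] card_cycle_sphere by simp
  qed
  moreover have "?layer a \<inter> ?layer a' = {}" "finite (?layer a)" "finite (?layer a')"
    using a'(2) by (auto simp: verts_prism)
  ultimately show ?thesis
    using False by (simp add: card_Un_disjoint)
qed

lemma distance_degree_regular_prism: "distance_degree_regular (prism n)"
  unfolding distance_degree_regular_def
proof (intro ballI allI)
  fix u v k assume uv: "u \<in> verts (prism n)" "v \<in> verts (prism n)"
  then obtain i a j b where "u = (i, a)" "v = (j, b)" "i < n" "a < 2" "j < n" "b < 2"
    by (auto simp: verts_prism)
  with uv show "card (sphere (prism n) u k) = card (sphere (prism n) v k)"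
    by (simp add: sphere_prism card_prism_sphere)
qed

lemma rank_eq_if_vstring_prism_eq:
  assumes "u \<in> verts (prism n)" "v \<in> verts (prism n)" "vstring (prism n) f u = vstring (prism n) f v"
  shows "f u = f v"
proof (rule rank_eq_if_vstring_eq[OF _ assms(1,2) _ assms(3)])
  show "finite (verts (prism n))"
    by (simp add: verts_prism)
  show "w = x" if "x \<in> verts (prism n)" "w \<in> verts (prism n)" "gdist (prism n) x w = 0" for x w
    using that by (simp add: gdist_prism prism_dist_eq_0_iff)
qed

lemma two_le_card_image_prism:
  assumes "0 < n" "inj_on (vstring (prism n) f) (verts (prism n))"
  shows "2 \<le> card (f ` verts (prism n))"
proof (rule two_le_card_image_if_inj_on_vstring[OF distance_degree_regular_prism])
  show "finite (verts (prism n))" "(0, 0) \<in> verts (prism n)" "(0, 1) \<in> verts (prism n)"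
    using assms(1) by (simp_all add: verts_prism)
qed (use assms(2) in simp_all)

section \<open>Small prisms by evaluation\<close>

definition prism_vertices :: "nat \<Rightarrow> (nat \<times> nat) list" where
  "prism_vertices n = List.product [0..<n] [0..<2]"

lemma set_prism_vertices: "set (prism_vertices n) = verts (prism n)"
  by (auto simp: prism_vertices_def verts_prism)

lemma distinct_prism_vertices: "distinct (prism_vertices n)"
  by (simp add: prism_vertices_def distinct_product)

definition sphere_masks :: "nat \<Rightarrow> nat \<times> nat \<Rightarrow> bool list list" where
  "sphere_masks n v = map (\<lambda>k. map (\<lambda>w. prism_dist n v w = k) (prism_vertices n)) [1..<n div 2 + 2]"

definition sphere_table :: "nat \<Rightarrow> bool list list list" where
  "sphere_table n = map (sphere_masks n) (prism_vertices n)"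

fun masked_sum :: "bool list \<Rightarrow> nat list \<Rightarrow> nat" where
  "masked_sum (b # bs) (x # xs) = (if b then x + masked_sum bs xs else masked_sum bs xs)"
| "masked_sum _ _ = 0"

definition table_strings :: "bool list list list \<Rightarrow> nat list \<Rightarrow> nat list list" where
  "table_strings T xs = map (map (\<lambda>m. masked_sum m xs)) T"

lemma masked_sum_map: "masked_sum (map P xs) (map g xs) = sum_list (map g (filter P xs))"
  by (induction xs) simp_all

lemma vstring_prism_of_nat:
  assumes "0 < n" "v \<in> verts (prism n)"
  shows "vstring (prism n) (\<lambda>w. real (g w)) v =
    map (\<lambda>m. real (masked_sum m (map g (prism_vertices n)))) (sphere_masks n v)"
proof -
  have "(\<Sum>w | w \<in> verts (prism n) \<and> prism_dist n v w = k. real (g w))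
      = real (sum_list (map g (filter (\<lambda>w. prism_dist n v w = k) (prism_vertices n))))" for k
  proof -
    let ?xs = "filter (\<lambda>w. prism_dist n v w = k) (prism_vertices n)"
    have "{w. w \<in> verts (prism n) \<and> prism_dist n v w = k} = set ?xs"
      by (auto simp: set_prism_vertices)
    moreover have "distinct ?xs"
      by (simp add: distinct_prism_vertices)
    ultimately show ?thesis
      by (simp add: sum_list_distinct_conv_sum_set of_nat_sum)
  qed
  then show ?thesis
    using assms by (simp add: vstring_prism sphere_masks_def masked_sum_map)
qed

lemma inj_on_vstring_prism_iff:
  assumes "0 < n"
  shows "inj_on (vstring (prism n) (\<lambda>w. real (g w))) (verts (prism n)) \<longleftrightarrow>
    distinct (table_strings (sphere_table n) (map g (prism_vertices n)))"
proof -
  define h where "h v = map (\<lambda>m. masked_sum m (map g (prism_vertices n))) (sphere_masks n v)" for v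
  have "inj_on (vstring (prism n) (\<lambda>w. real (g w))) (verts (prism n)) \<longleftrightarrow>
      inj_on (\<lambda>v. map real (h v)) (verts (prism n))"
    using assms by (intro inj_on_cong) (simp add: vstring_prism_of_nat h_def)
  also have "\<dots> \<longleftrightarrow> inj_on h (verts (prism n))"
    by (simp add: inj_on_def inj_map_eq_map)
  also have "\<dots> \<longleftrightarrow> distinct (map h (prism_vertices n))"
    by (simp add: distinct_map distinct_prism_vertices set_prism_vertices)
  finally show ?thesis
    by (simp add: table_strings_def sphere_table_def h_def[abs_def] comp_def)
qed

lemma card_image_of_nat_verts_prism:
  "card ((\<lambda>w. real (g w)) ` verts (prism n)) = card (set (map g (prism_vertices n)))"
proof -
  have "(\<lambda>w. real (g w)) ` verts (prism n) = real ` set (map g (prism_vertices n))"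
    by (simp add: set_prism_vertices image_image)
  then show ?thesis
    by (simp add: card_image)
qed

text \<open>The sphere table is evaluated once, and the 0/1 assignments are generated by recursion
  instead of as a list of all \<open>2\<^sup>2\<^sup>n\<close> of them; this keeps the evaluation by \<open>code_simp\<close>
  linear in their number.\<close>

fun all_01_prefixes_collide :: "bool list list list \<Rightarrow> nat \<Rightarrow> nat list \<Rightarrow> bool" where
  "all_01_prefixes_collide T 0 xs \<longleftrightarrow> \<not> distinct (table_strings T xs)"
| "all_01_prefixes_collide T (Suc k) xs \<longleftrightarrow>
     all_01_prefixes_collide T k (1 # xs) \<and> all_01_prefixes_collide T k (0 # xs)"

lemma all_01_prefixes_collideD:
  assumes "all_01_prefixes_collide T (length ys) xs" "set ys \<subseteq> {0, 1}"
  shows "\<not> distinct (table_strings T (ys @ xs))"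
  using assms
proof (induction ys arbitrary: xs rule: rev_induct)
  case Nil
  then show ?case by simp
next
  case (snoc y ys)
  then have "all_01_prefixes_collide T (length ys) (y # xs)"
    by auto
  with snoc show ?case
    by simp
qed

lemma no_two_valued_resolving_prism:
  assumes "0 < n" "all_01_prefixes_collide (sphere_table n) (2 * n) []"
    and "f ` verts (prism n) \<subseteq> {\<alpha>, \<beta>}"
  shows "\<not> inj_on (vstring (prism n) f) (verts (prism n))"
proof
  define g where "g w = (of_bool (f w = \<alpha>) :: nat)" for w
  assume "inj_on (vstring (prism n) f) (verts (prism n))"
  with distance_degree_regular_prism assms(3)
  have "inj_on (vstring (prism n) (\<lambda>w. real (g w))) (verts (prism n))"
    unfolding g_def of_nat_of_bool by (rule inj_on_vstring_indicator_if_two_valued)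
  then have "distinct (table_strings (sphere_table n) (map g (prism_vertices n) @ []))"
    using assms(1) by (simp add: inj_on_vstring_prism_iff)
  moreover have "length (map g (prism_vertices n)) = 2 * n" "set (map g (prism_vertices n)) \<subseteq> {0, 1}"
    by (auto simp: prism_vertices_def length_product g_def)
  ultimately show False
    using assms(2) all_01_prefixes_collideD by metis
qed

definition small_prism_rank :: "nat \<times> nat \<Rightarrow> nat" where
  "small_prism_rank w = (if w = (0, 1) then 1 else if w = (0, 0) \<or> w = (1, 0) then 2 else 0)"

definition hexagonal_prism_rank :: "nat \<times> nat \<Rightarrow> nat" where
  "hexagonal_prism_rank w = of_bool (w \<in> {(0, 0), (0, 1), (1, 0), (2, 0), (4, 0)})"

lemma small_prism_computations:
  assumes "n \<in> {3, 4, 5}"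
  shows "all_01_prefixes_collide (sphere_table n) (2 * n) []"
    and "distinct (table_strings (sphere_table n) (map small_prism_rank (prism_vertices n)))"
    and "card (set (map small_prism_rank (prism_vertices n))) = 3"
  using assms by (auto; code_simp)+

lemma hexagonal_prism_computations:
  shows "distinct (table_strings (sphere_table 6) (map hexagonal_prism_rank (prism_vertices 6)))"
    and "card (set (map hexagonal_prism_rank (prism_vertices 6))) = 2"
  by code_simp+

section \<open>A two-valued assignment for large prisms\<close>

text \<open>Over \<open>int\<close> the case analyses below avoid truncated subtraction and stay fast.\<close>

lemma int_cycle_dist_0: "i < n \<Longrightarrow> int (cycle_dist n i 0) = min (int i) (int n - int i)"
  by (simp add: cycle_dist_def min_def of_nat_diff; linarith)

lemma int_cycle_dist_2:
  "i < n \<Longrightarrow> 4 \<le> n \<Longrightarrow> int (cycle_dist n i 2) = (if i \<le> 2 then 2 - int i else min (int i - 2) (int n + 2 - int i))"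
  by (simp add: cycle_dist_def min_def of_nat_diff; linarith)

lemma cycle_dist_0_2_inj:
  assumes "5 \<le> n" "i < n" "j < n" "cycle_dist n i 0 = cycle_dist n j 0" "cycle_dist n i 2 = cycle_dist n j 2"
  shows "i = j"
proof -
  have "int (cycle_dist n i 0) = int (cycle_dist n j 0)" "int (cycle_dist n i 2) = int (cycle_dist n j 2)"
    using assms(4,5) by simp_all
  with assms(1-3) show ?thesis
    by (auto simp: int_cycle_dist_0 int_cycle_dist_2 min_def split: if_splits)
qed

text \<open>With \<open>c\<close> the layer, this says that a layer has at most one vertex equidistant from
  \<open>(0,0)\<close> and \<open>(2,1)\<close>.\<close>

lemma cycle_dist_0_2_offset_unique:
  assumes "4 \<le> n" "i < n" "j < n" "c \<le> 1"
    "cycle_dist n i 0 + c = cycle_dist n i 2 + (1 - c)" "cycle_dist n j 0 + c = cycle_dist n j 2 + (1 - c)"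
  shows "i = j"
proof -
  have "int (cycle_dist n i 0) + 2 * int c = int (cycle_dist n i 2) + 1"
    "int (cycle_dist n j 0) + 2 * int c = int (cycle_dist n j 2) + 1"
    using assms(4-6) by linarith+
  with assms(1-4) show ?thesis
    by (auto simp: int_cycle_dist_0 int_cycle_dist_2 min_def split: if_splits) presburger+
qed

lemma signed_indicators_eq_cases:
  fixes x y x' y' d :: nat
  assumes "x \<le> d" "y \<le> d" "x' \<le> d" "y' \<le> d"
    and eq: "\<And>k. 1 \<le> k \<Longrightarrow> k \<le> d \<Longrightarrow>
      of_bool (x = k) - of_bool (y = k) = (of_bool (x' = k) - of_bool (y' = k) :: real)"
  shows "x = x' \<and> y = y' \<or> x = y \<and> x' = y'"
proof -
  have x: "x' = x \<and> y' \<noteq> x" if "x \<noteq> 0" "x \<noteq> y"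
    using eq[of x] that assms(1) by (auto simp: of_bool_def split: if_splits)
  have y: "y' = y \<and> x' \<noteq> y" if "y \<noteq> 0" "x \<noteq> y"
    using eq[of y] that assms(2) by (auto simp: of_bool_def split: if_splits)
  have x': "x = x' \<and> y \<noteq> x'" if "x' \<noteq> 0" "x' \<noteq> y'"
    using eq[of x'] that assms(3) by (auto simp: of_bool_def split: if_splits)
  have y': "y = y' \<and> x \<noteq> y'" if "y' \<noteq> 0" "x' \<noteq> y'"
    using eq[of y'] that assms(4) by (auto simp: of_bool_def split: if_splits)
  show ?thesis
    using x y x' y' by metis
qed

definition large_prism_rank :: "nat \<times> nat \<Rightarrow> nat" where
  "large_prism_rank w = (if snd w = 1 then of_bool (fst w \<noteq> 2) else of_bool (fst w = 0))"

lemma card_image_large_prism_rank: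
  assumes "3 \<le> n"
  shows "card ((\<lambda>w. real (large_prism_rank w)) ` verts (prism n)) = 2"
proof -
  have "(\<lambda>w. real (large_prism_rank w)) ` verts (prism n) = {0, 1}"
  proof
    have "real (large_prism_rank w) \<in> {0, 1}" for w
      by (simp add: large_prism_rank_def)
    then show "(\<lambda>w. real (large_prism_rank w)) ` verts (prism n) \<subseteq> {0, 1}"
      by blast
    have "(0, 0) \<in> verts (prism n)" "(2, 1) \<in> verts (prism n)"
      using assms by (auto simp: verts_prism)
    then show "{0, 1} \<subseteq> (\<lambda>w. real (large_prism_rank w)) ` verts (prism n)"
      by (force simp: large_prism_rank_def)
  qed
  then show ?thesis
    by simp
qed

lemma sum_large_prism_rank:
  assumes "3 \<le> n" "i < n" "a < 2" "1 \<le> k"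
  shows "(\<Sum>w | w \<in> verts (prism n) \<and> prism_dist n (i, a) w = k. real (large_prism_rank w))
    = real (cycle_sphere_size n (k - of_bool (a = 0)))
      + of_bool (prism_dist n (i, a) (0, 0) = k) - of_bool (prism_dist n (i, a) (2, 1) = k)"
proof -
  let ?A = "{w \<in> verts (prism n). prism_dist n (i, a) w = k}"
  have fin: "finite ?A"
    by (simp add: verts_prism)
  have "(\<Sum>w\<in>?A. real (large_prism_rank w))
      = (\<Sum>w\<in>?A. of_bool (snd w = 1) + (if w = (0, 0) then 1 else 0) - (if w = (2, 1) then 1 else 0))"
    by (intro sum.cong refl) (auto simp: large_prism_rank_def verts_prism)
  also have "\<dots> = real (card (?A \<inter> {w. snd w = 1}))
      + (if (0, 0) \<in> ?A then 1 else 0) - (if (2, 1) \<in> ?A then 1 else 0)"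
    using fin by (simp only: sum.distrib sum_subtractf sum.delta sum_of_bool_eq)
  also have "?A \<inter> {w. snd w = 1} = {w \<in> verts (prism n). prism_dist n (i, a) w = k \<and> snd w = 1}"
    by blast
  also have "card \<dots> = cycle_sphere_size n (k - of_bool (a = 0))"
  proof -
    have "{j. j < n \<and> cycle_dist n i j + of_bool (a \<noteq> 1) = k}
        = {j. j < n \<and> cycle_dist n i j = k - of_bool (a = 0)}"
      using assms(3,4) by auto
    then show ?thesis
      using assms card_prism_layer_sphere[of i n a 1] card_cycle_sphere by simp
  qed
  finally have "(\<Sum>w\<in>?A. real (large_prism_rank w)) = real (cycle_sphere_size n (k - of_bool (a = 0)))
      + (if (0, 0) \<in> ?A then 1 else 0) - (if (2, 1) \<in> ?A then 1 else 0)" .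
  moreover have "(0, 0) \<in> ?A \<longleftrightarrow> prism_dist n (i, a) (0, 0) = k"
    "(2, 1) \<in> ?A \<longleftrightarrow> prism_dist n (i, a) (2, 1) = k"
    using assms(1) by (auto simp: verts_prism)
  ultimately show ?thesis
    by simp
qed

lemma vstring_large_prism_rank:
  assumes "3 \<le> n" "u \<in> verts (prism n)"
  shows "vstring (prism n) (\<lambda>w. real (large_prism_rank w)) u =
    map (\<lambda>k. real (cycle_sphere_size n (k - of_bool (snd u = 0)))
      + of_bool (prism_dist n u (0, 0) = k) - of_bool (prism_dist n u (2, 1) = k))
      [1..<n div 2 + 2]"
proof -
  obtain i a where "u = (i, a)" "i < n" "a < 2"
    using assms(2) by (auto simp: verts_prism)
  with assms show ?thesis
    by (auto simp: vstring_prism sum_large_prism_rank intro!: map_cong)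
qed

lemma large_prism_rank_separates_layers:
  assumes "7 \<le> n" "i < n" "j < n"
  shows "vstring (prism n) (\<lambda>w. real (large_prism_rank w)) (i, 0)
    \<noteq> vstring (prism n) (\<lambda>w. real (large_prism_rank w)) (j, 1)"
proof
  let ?R = "\<lambda>w. real (large_prism_rank w)"
  assume eq: "vstring (prism n) ?R (i, 0) = vstring (prism n) ?R (j, 1)"
  have verts: "(i, 0) \<in> verts (prism n)" "(j, 1) \<in> verts (prism n)"
    using assms by (auto simp: verts_prism)
  have "?R (i, 0) = ?R (j, 1)"
    using verts eq by (rule rank_eq_if_vstring_prism_eq)
  then have rank: "i = 0 \<or> j = 2"
    by (auto simp: large_prism_rank_def split: if_splits)
  let ?entry = "\<lambda>u k. real (cycle_sphere_size n (k - of_bool (snd u = 0)))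
    + of_bool (prism_dist n u (0, 0) = k) - of_bool (prism_dist n u (2, 1) = k)"
  have "3 \<le> n"
    using assms(1) by simp
  with eq verts have entries: "\<forall>k\<in>set [1..<n div 2 + 2]. ?entry (i, 0) k = ?entry (j, 1) k"
    by (simp only: vstring_large_prism_rank map_eq_conv)
  have "1 \<in> set [1..<n div 2 + 2]" "3 \<in> set [1..<n div 2 + 2]"
    using assms(1) by auto
  with entries have at1: "?entry (i, 0) 1 = ?entry (j, 1) 1" and at3: "?entry (i, 0) 3 = ?entry (j, 1) 3"
    by blast+
  have sizes: "cycle_sphere_size n 0 = 1" "cycle_sphere_size n 1 = 2" "cycle_sphere_size n 2 = 2"
    "cycle_sphere_size n 3 = 2"
    using assms(1) by (simp_all add: cycle_sphere_size_def)
  from rank show False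
  proof
    assume "i = 0"
    then have "prism_dist n (i, 0) (0, 0) = 0" "prism_dist n (i, 0) (2, 1) = 3"
      using assms(1) by (simp_all add: prism_dist_def cycle_dist_def)
    with at1 at3 sizes have "prism_dist n (j, 1) (2, 1) = 1" "prism_dist n (j, 1) (2, 1) = 3"
      by (simp_all add: of_bool_def split: if_splits)
    then show False by simp
  next
    assume "j = 2"
    then have "prism_dist n (j, 1) (0, 0) = 3" "prism_dist n (j, 1) (2, 1) = 0"
      using assms(1) by (simp_all add: prism_dist_def cycle_dist_def)
    with at1 at3 sizes have "prism_dist n (i, 0) (0, 0) = 1" "prism_dist n (i, 0) (0, 0) = 3"
      by (simp_all add: of_bool_def split: if_splits)
    then show False by simp
  qed
qed

lemma inj_on_vstring_large_prism_rank:
  assumes "7 \<le> n"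
  shows "inj_on (vstring (prism n) (\<lambda>w. real (large_prism_rank w))) (verts (prism n))"
proof (rule inj_onI)
  let ?R = "\<lambda>w. real (large_prism_rank w)"
  let ?x = "\<lambda>u. prism_dist n u (0, 0)" and ?y = "\<lambda>u. prism_dist n u (2, 1)"
  fix u v assume u: "u \<in> verts (prism n)" and v: "v \<in> verts (prism n)"
    and eq: "vstring (prism n) ?R u = vstring (prism n) ?R v"
  obtain i a j b where uv: "u = (i, a)" "v = (j, b)" "i < n" "a < 2" "j < n" "b < 2"
    using u v by (auto simp: verts_prism)
  have "a = b"
  proof (rule ccontr)
    assume "a \<noteq> b"
    with uv have "a = 0 \<and> b = 1 \<or> a = 1 \<and> b = 0"
      by auto
    with eq uv assms large_prism_rank_separates_layers[of n i j] large_prism_rank_separates_layers[of n j i]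
    show False by auto
  qed
  have "3 \<le> n"
    using assms by simp
  with eq u v have "\<forall>k\<in>set [1..<n div 2 + 2].
      real (cycle_sphere_size n (k - of_bool (snd u = 0))) + of_bool (?x u = k) - of_bool (?y u = k)
      = real (cycle_sphere_size n (k - of_bool (snd v = 0))) + of_bool (?x v = k) - of_bool (?y v = k)"
    by (simp only: vstring_large_prism_rank map_eq_conv)
  moreover have "snd u = snd v"
    using uv \<open>a = b\<close> by simp
  ultimately have "of_bool (?x u = k) - of_bool (?y u = k) = (of_bool (?x v = k) - of_bool (?y v = k) :: real)"
    if "1 \<le> k" "k \<le> n div 2 + 1" for k
    using that by fastforce
  then have "?x u = ?x v \<and> ?y u = ?y v \<or> ?x u = ?y u \<and> ?x v = ?y v"
    by (rule signed_indicators_eq_cases[OF prism_dist_le prism_dist_le prism_dist_le prism_dist_le])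
  then show "u = v"
  proof
    assume "?x u = ?x v \<and> ?y u = ?y v"
    then have "cycle_dist n i 0 = cycle_dist n j 0" "cycle_dist n i 2 = cycle_dist n j 2"
      using uv \<open>a = b\<close> by (simp_all add: prism_dist_def)
    with assms uv \<open>a = b\<close> show "u = v"
      using cycle_dist_0_2_inj[of n i j] by simp
  next
    assume "?x u = ?y u \<and> ?x v = ?y v"
    moreover have "of_bool (a \<noteq> 0) = a" "of_bool (a \<noteq> 1) = 1 - a"
      using uv(4) by (auto simp: less_2_cases_iff)
    ultimately have "cycle_dist n i 0 + a = cycle_dist n i 2 + (1 - a)"
      "cycle_dist n j 0 + a = cycle_dist n j 2 + (1 - a)"
      using uv \<open>a = b\<close> by (simp_all add: prism_dist_def)
    with assms uv \<open>a = b\<close> show "u = v"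
      using cycle_dist_0_2_offset_unique[of n i j a] by simp
  qed
qed

lemma IDI_small_prism:
  assumes "n \<in> {3, 4, 5}"
  shows "IDI (prism n) = 3"
proof (rule IDI_eqI)
  have "0 < n"
    using assms by auto
  then show "\<exists>f. card (f ` verts (prism n)) = 3 \<and> inj_on (vstring (prism n) f) (verts (prism n))"
    using small_prism_computations[OF assms]
    by (metis inj_on_vstring_prism_iff card_image_of_nat_verts_prism)
  fix f assume inj: "inj_on (vstring (prism n) f) (verts (prism n))"
  with \<open>0 < n\<close> have "2 \<le> card (f ` verts (prism n))"
    by (rule two_le_card_image_prism)
  moreover have "card (f ` verts (prism n)) \<noteq> 2"
  proof
    assume "card (f ` verts (prism n)) = 2"
    then obtain \<alpha> \<beta> where "f ` verts (prism n) = {\<alpha>, \<beta>}"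
      by (meson card_2_iff)
    with \<open>0 < n\<close> small_prism_computations(1)[OF assms] inj show False
      using no_two_valued_resolving_prism by blast
  qed
  ultimately show "3 \<le> card (f ` verts (prism n))"
    by linarith
qed

lemma IDI_hexagonal_prism: "IDI (prism 6) = 2"
proof (rule IDI_eqI)
  show "\<exists>f. card (f ` verts (prism 6)) = 2 \<and> inj_on (vstring (prism 6) f) (verts (prism 6))"
    using hexagonal_prism_computations
    by (metis inj_on_vstring_prism_iff card_image_of_nat_verts_prism zero_less_numeral)
qed (rule two_le_card_image_prism, simp_all)

lemma IDI_large_prism:
  assumes "7 \<le> n"
  shows "IDI (prism n) = 2"
proof (rule IDI_eqI)
  show "\<exists>f. card (f ` verts (prism n)) = 2 \<and> inj_on (vstring (prism n) f) (verts (prism n))"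
    using assms card_image_large_prism_rank[of n] inj_on_vstring_large_prism_rank[OF assms]
    by (intro exI[of _ "\<lambda>w. real (large_prism_rank w)"]) simp
qed (use assms in \<open>simp add: two_le_card_image_prism\<close>)

theorem mainTheorem6:
  fixes n :: nat
  assumes "n \<ge> 3"
  shows "(n \<ge> 6 \<longrightarrow> IDI (prism n) = 2) \<and> (n \<le> 5 \<longrightarrow> IDI (prism n) = 3)"
proof (intro conjI impI)
  assume "n \<ge> 6"
  then consider "n = 6" | "n \<ge> 7"
    by linarith
  then show "IDI (prism n) = 2"
    by cases (simp_all add: IDI_hexagonal_prism IDI_large_prism)
next
  assume "n \<le> 5"
  with assms have "n \<in> {3, 4, 5}"
    by auto
  then show "IDI (prism n) = 3"
    by (rule IDI_small_prism)
qed

end
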